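(* A permutation $\pi\in\mathcal{S}_n$ is a Schröder permutation (i.e. avoids both $1243$ and $2143$) if and only if every element $(i,j)$ of its essential set $\mathcal{E}(\pi)$ has rank $\rho(i,j)\le 1$.
   Context: For $\pi=\pi_1\cdots\pi_n\in\mathcal{S}_n$ and $\tau\in\mathcal{S}_k$, $\pi$ contains the pattern $\tau$ if there are indices $i_1<\dots<i_k$ with $\pi_{i_1}\cdots\pi_{i_k}$ in the same relative order as $\tau_1\cdots\tau_k$; otherwise $\pi$ avoids $\tau$. Represent $\pi$ by an $n\times n$ array, rows $i=1,\dots,n$ numbered top to bottom and columns $j=1,\dots,n$ left to right, with a dot in square $(i,\pi_i)$. The diagram $D(\pi)$ is the set of squares $(i,j)$ with $\pi_i>j$ and $\pi^{-1}(j)>i$. The essential set $\mathcal{E}(\pi)$ is the set of squares $(i,j)\in D(\pi)$ such that $(i+1,j)\notin D(\pi)$ and $(i,j+1)\notin D(\pi)$ (squares outside the array count as not in $D(\pi)$). The rank of a square $(i,j)$ is $\rho(i,j)=\#\{k<i:\pi_k<j\}$, the number of dots strictly northwest of it. *)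

theory Defs
  imports "HOL-Combinatorics.Permutations"
begin

text \<open>Permutations of [n] = {1..n} are functions p :: nat => nat with p permutes {1..n};
  p i is the entry pi_i. Patterns tau in S_k are likewise functions with tau permutes {1..k}.\<close>

definition contains_pattern :: "nat \<Rightarrow> (nat \<Rightarrow> nat) \<Rightarrow> nat \<Rightarrow> (nat \<Rightarrow> nat) \<Rightarrow> bool" where
  "contains_pattern n p k tau \<longleftrightarrow>
     (\<exists>idx :: nat \<Rightarrow> nat.
        (\<forall>a\<in>{1..k}. idx a \<in> {1..n}) \<and>
        (\<forall>a\<in>{1..k}. \<forall>b\<in>{1..k}. a < b \<longrightarrow> idx a < idx b) \<and>
        (\<forall>a\<in>{1..k}. \<forall>b\<in>{1..k}. p (idx a) < p (idx b) \<longleftrightarrow> tau a < tau b))"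

definition avoids_pattern :: "nat \<Rightarrow> (nat \<Rightarrow> nat) \<Rightarrow> nat \<Rightarrow> (nat \<Rightarrow> nat) \<Rightarrow> bool" where
  "avoids_pattern n p k tau \<longleftrightarrow> \<not> contains_pattern n p k tau"

definition perm_of_list :: "nat list \<Rightarrow> nat \<Rightarrow> nat" where
  "perm_of_list xs i = (if 1 \<le> i \<and> i \<le> length xs then xs ! (i - 1) else i)"

definition pat1243 :: "nat \<Rightarrow> nat" where "pat1243 = perm_of_list [1,2,4,3]"
definition pat2143 :: "nat \<Rightarrow> nat" where "pat2143 = perm_of_list [2,1,4,3]"

definition schroeder_perm :: "nat \<Rightarrow> (nat \<Rightarrow> nat) \<Rightarrow> bool" where
  "schroeder_perm n p \<longleftrightarrow> avoids_pattern n p 4 pat1243 \<and> avoids_pattern n p 4 pat2143"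

definition diagram :: "nat \<Rightarrow> (nat \<Rightarrow> nat) \<Rightarrow> (nat \<times> nat) set" where
  "diagram n p = {(i, j). i \<in> {1..n} \<and> j \<in> {1..n} \<and> p i > j \<and> inv p j > i}"

definition essential_set :: "nat \<Rightarrow> (nat \<Rightarrow> nat) \<Rightarrow> (nat \<times> nat) set" where
  "essential_set n p = {(i, j). (i, j) \<in> diagram n p \<and> (i + 1, j) \<notin> diagram n p
                                \<and> (i, j + 1) \<notin> diagram n p}"

definition rank :: "(nat \<Rightarrow> nat) \<Rightarrow> nat \<Rightarrow> nat \<Rightarrow> nat" where
  "rank p i j = card {k. 1 \<le> k \<and> k < i \<and> p k < j}"

end

theory Submission
  imports Defs
begin

text \<open>A permutation p contains 1243 or 2143 exactly when there are positions a < b < c < d with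
  p a, p b < p d < p c. Such positions are the same thing as a square (c, p d) of the diagram
  with the two dots in rows a and b northwest of it, i.e. a diagram square of rank at least 2.
  Since every diagram square lies weakly northwest of an essential square and the rank is
  monotone in both coordinates, it suffices to look at the essential set.\<close>

lemma atLeastAtMost_1_4: "{1..4::nat} = {1, 2, 3, 4}"
  by auto

lemma contains_pattern_4_iff:
  "contains_pattern n p 4 tau \<longleftrightarrow>
     (\<exists>a b c d. 1 \<le> a \<and> a < b \<and> b < c \<and> c < d \<and> d \<le> n \<and>
        (\<forall>x\<in>{1..4}. \<forall>y\<in>{1..4}.
           p (perm_of_list [a, b, c, d] x) < p (perm_of_list [a, b, c, d] y) \<longleftrightarrow> tau x < tau y))"
  (is "?lhs \<longleftrightarrow> ?rhs")
proof
  assume ?lhs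
  then obtain idx where
    range: "\<forall>x\<in>{1..4}. idx x \<in> {1..n}" and
    mono: "\<forall>x\<in>{1..4}. \<forall>y\<in>{1..4}. x < y \<longrightarrow> idx x < idx y" and
    order: "\<forall>x\<in>{1..4}. \<forall>y\<in>{1..4}. p (idx x) < p (idx y) \<longleftrightarrow> tau x < tau y"
    unfolding contains_pattern_def by blast
  have idx_eq: "\<forall>x\<in>{1..4}. perm_of_list [idx 1, idx 2, idx 3, idx 4] x = idx x"
    unfolding atLeastAtMost_1_4 by (simp add: perm_of_list_def)
  have "1 \<le> idx 1" "idx 1 < idx 2" "idx 2 < idx 3" "idx 3 < idx 4" "idx 4 \<le> n"
    using range mono unfolding atLeastAtMost_1_4 by simp_all
  moreover have "\<forall>x\<in>{1..4}. \<forall>y\<in>{1..4}.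
      p (perm_of_list [idx 1, idx 2, idx 3, idx 4] x) < p (perm_of_list [idx 1, idx 2, idx 3, idx 4] y)
      \<longleftrightarrow> tau x < tau y"
    using order idx_eq by simp
  ultimately show ?rhs by blast
next
  assume ?rhs
  then obtain a b c d where "1 \<le> a" "a < b" "b < c" "c < d" "d \<le> n" and
    order: "\<forall>x\<in>{1..4}. \<forall>y\<in>{1..4}.
      p (perm_of_list [a, b, c, d] x) < p (perm_of_list [a, b, c, d] y) \<longleftrightarrow> tau x < tau y"
    by blast
  then show ?lhs
    unfolding contains_pattern_def atLeastAtMost_1_4
    by (intro exI[of _ "perm_of_list [a, b, c, d]"]) (simp add: perm_of_list_def)
qed

lemma contains_1243_iff:
  "contains_pattern n p 4 pat1243 \<longleftrightarrow>
     (\<exists>a b c d. 1 \<le> a \<and> a < b \<and> b < c \<and> c < d \<and> d \<le> n \<and> p a < p b \<and> p b < p d \<and> p d < p c)"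
proof -
  have "(\<forall>x\<in>{1..4}. \<forall>y\<in>{1..4}.
          p (perm_of_list [a, b, c, d] x) < p (perm_of_list [a, b, c, d] y) \<longleftrightarrow> pat1243 x < pat1243 y)
        \<longleftrightarrow> p a < p b \<and> p b < p d \<and> p d < p c" for a b c d
    unfolding atLeastAtMost_1_4 by (auto simp: pat1243_def perm_of_list_def)
  then show ?thesis
    unfolding contains_pattern_4_iff by simp
qed

lemma contains_2143_iff:
  "contains_pattern n p 4 pat2143 \<longleftrightarrow>
     (\<exists>a b c d. 1 \<le> a \<and> a < b \<and> b < c \<and> c < d \<and> d \<le> n \<and> p b < p a \<and> p a < p d \<and> p d < p c)"
proof -
  have "(\<forall>x\<in>{1..4}. \<forall>y\<in>{1..4}.
          p (perm_of_list [a, b, c, d] x) < p (perm_of_list [a, b, c, d] y) \<longleftrightarrow> pat2143 x < pat2143 y)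
        \<longleftrightarrow> p b < p a \<and> p a < p d \<and> p d < p c" for a b c d
    unfolding atLeastAtMost_1_4 by (auto simp: pat2143_def perm_of_list_def)
  then show ?thesis
    unfolding contains_pattern_4_iff by simp
qed

definition contains_1243_or_2143 :: "nat \<Rightarrow> (nat \<Rightarrow> nat) \<Rightarrow> bool" where
  "contains_1243_or_2143 n p \<longleftrightarrow>
    (\<exists>a b c d. 1 \<le> a \<and> a < b \<and> b < c \<and> c < d \<and> d \<le> n \<and> p a < p d \<and> p b < p d \<and> p d < p c)"

lemma not_schroeder_iff:
  assumes "inj_on p {1..n}"
  shows "\<not> schroeder_perm n p \<longleftrightarrow> contains_1243_or_2143 n p"
proof
  assume "\<not> schroeder_perm n p"
  then show "contains_1243_or_2143 n p"
    unfolding schroeder_perm_def avoids_pattern_def contains_1243_iff contains_2143_iff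
      contains_1243_or_2143_def
    by (meson order.strict_trans)
next
  assume "contains_1243_or_2143 n p"
  then obtain a b c d where Q: "1 \<le> a" "a < b" "b < c" "c < d" "d \<le> n"
    "p a < p d" "p b < p d" "p d < p c"
    unfolding contains_1243_or_2143_def by blast
  then have "p a \<noteq> p b"
    using inj_onD[OF assms, of a b] by auto
  then show "\<not> schroeder_perm n p"
    unfolding schroeder_perm_def avoids_pattern_def contains_1243_iff contains_2143_iff
    using Q by (metis linorder_neqE_nat)
qed

lemma two_le_card_iff_less:
  fixes S :: "'a :: linorder set"
  assumes "finite S"
  shows "2 \<le> card S \<longleftrightarrow> (\<exists>a\<in>S. \<exists>b\<in>S. a < b)"
proof
  assume "2 \<le> card S"
  then obtain a b where "a \<in> S" "b \<in> S" "a \<noteq> b"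
    by (auto simp: numeral_2_eq_2 card_le_Suc_iff)
  then show "\<exists>a\<in>S. \<exists>b\<in>S. a < b"
    by (meson linorder_neqE)
next
  assume "\<exists>a\<in>S. \<exists>b\<in>S. a < b"
  then obtain a b where "a \<in> S" "b \<in> S" "a < b" by blast
  then have "card {a, b} \<le> card S"
    by (intro card_mono assms) auto
  with \<open>a < b\<close> show "2 \<le> card S" by simp
qed

lemma two_le_rank_iff:
  "2 \<le> rank p i j \<longleftrightarrow> (\<exists>a b. 1 \<le> a \<and> a < b \<and> b < i \<and> p a < j \<and> p b < j)"
proof -
  define S where "S = {k. 1 \<le> k \<and> k < i \<and> p k < j}"
  have "2 \<le> rank p i j \<longleftrightarrow> (\<exists>a\<in>S. \<exists>b\<in>S. a < b)"
    unfolding rank_def S_def by (rule two_le_card_iff_less) simp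
  also have "\<dots> \<longleftrightarrow> (\<exists>a b. 1 \<le> a \<and> a < b \<and> b < i \<and> p a < j \<and> p b < j)"
  proof
    assume "\<exists>a\<in>S. \<exists>b\<in>S. a < b"
    then show "\<exists>a b. 1 \<le> a \<and> a < b \<and> b < i \<and> p a < j \<and> p b < j"
      unfolding S_def by blast
  next
    assume "\<exists>a b. 1 \<le> a \<and> a < b \<and> b < i \<and> p a < j \<and> p b < j"
    then obtain a b where "1 \<le> a" "a < b" "b < i" "p a < j" "p b < j" by blast
    then have "a \<in> S" "b \<in> S" unfolding S_def by simp_all
    with \<open>a < b\<close> show "\<exists>a\<in>S. \<exists>b\<in>S. a < b" by blast
  qed
  finally show ?thesis .
qed

lemma rank_mono:
  assumes "i \<le> i'" "j \<le> j'"
  shows "rank p i j \<le> rank p i' j'"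
  unfolding rank_def using assms by (intro card_mono) auto

lemma diagram_two_le_rank_iff:
  assumes perm: "p permutes {1..n}"
  shows "(\<exists>(i, j)\<in>diagram n p. 2 \<le> rank p i j) \<longleftrightarrow> contains_1243_or_2143 n p"
proof
  assume "\<exists>(i, j)\<in>diagram n p. 2 \<le> rank p i j"
  then obtain i j where ij: "(i, j) \<in> diagram n p" and "2 \<le> rank p i j" by blast
  then obtain a b where ab: "1 \<le> a" "a < b" "b < i" "p a < j" "p b < j"
    unfolding two_le_rank_iff by blast
  define d where "d = inv p j"
  have "j \<in> {1..n}" "j < p i" "i < d"
    using ij by (auto simp: diagram_def d_def)
  moreover have "p d = j"
    unfolding d_def using perm by (rule permutes_inverses(1))
  moreover have "d \<in> {1..n}"
    unfolding d_def using permutes_in_image[OF permutes_inv[OF perm]] \<open>j \<in> {1..n}\<close> by blast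
  ultimately show "contains_1243_or_2143 n p"
    unfolding contains_1243_or_2143_def using ab by (intro exI[of _ a] exI[of _ b] exI[of _ i] exI[of _ d]) auto
next
  assume "contains_1243_or_2143 n p"
  then obtain a b c d where abcd: "1 \<le> a" "a < b" "b < c" "c < d" "d \<le> n"
    and vals: "p a < p d" "p b < p d" "p d < p c"
    unfolding contains_1243_or_2143_def by blast
  have "p d \<in> {1..n}"
    using permutes_in_image[OF perm] abcd by simp
  moreover have "inv p (p d) = d"
    using perm by (rule permutes_inverses(2))
  ultimately have "(c, p d) \<in> diagram n p"
    using abcd vals by (auto simp: diagram_def)
  moreover have "2 \<le> rank p c (p d)"
    unfolding two_le_rank_iff using abcd vals by blast
  ultimately show "\<exists>(i, j)\<in>diagram n p. 2 \<le> rank p i j" by blast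
qed

lemma diagram_le_essential:
  assumes "(i, j) \<in> diagram n p"
  shows "\<exists>(i', j')\<in>essential_set n p. i \<le> i' \<and> j \<le> j'"
proof -
  define P where "P s \<longleftrightarrow> s \<in> diagram n p \<and> i \<le> fst s \<and> j \<le> snd s" for s
  have "P (i, j)" "\<forall>s. P s \<longrightarrow> fst s + snd s < 2 * n + 1"
    using assms by (auto simp: P_def diagram_def)
  then obtain s where "P s" and greatest: "\<And>s'. P s' \<Longrightarrow> fst s' + snd s' \<le> fst s + snd s"
    using Lattices_Big.ex_has_greatest_nat[of P "(i, j)" "\<lambda>s. fst s + snd s"] by blast
  obtain i' j' where s: "s = (i', j')" by fastforce
  have "\<not> P (i' + 1, j')" "\<not> P (i', j' + 1)"
    using greatest s by fastforce+
  then show ?thesis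
    using \<open>P s\<close> s by (auto simp: P_def essential_set_def)
qed

lemma essential_rank_le_1_iff:
  "(\<forall>(i, j)\<in>essential_set n p. rank p i j \<le> 1) \<longleftrightarrow> \<not> (\<exists>(i, j)\<in>diagram n p. 2 \<le> rank p i j)"
proof
  assume le_1: "\<forall>(i, j)\<in>essential_set n p. rank p i j \<le> 1"
  show "\<not> (\<exists>(i, j)\<in>diagram n p. 2 \<le> rank p i j)"
  proof clarify
    fix i j assume "(i, j) \<in> diagram n p" "2 \<le> rank p i j"
    moreover obtain i' j' where "(i', j') \<in> essential_set n p" "i \<le> i'" "j \<le> j'"
      using diagram_le_essential[OF \<open>(i, j) \<in> diagram n p\<close>] by blast
    ultimately show False
      using le_1 rank_mono[of i i' j j' p] by fastforce
  qed
qed (auto simp: essential_set_def)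

theorem theorem2p1:
  fixes n :: nat and p :: "nat \<Rightarrow> nat"
  assumes "p permutes {1..n}"
  shows "schroeder_perm n p \<longleftrightarrow> (\<forall>(i, j) \<in> essential_set n p. rank p i j \<le> 1)"
proof -
  have "\<not> schroeder_perm n p \<longleftrightarrow> contains_1243_or_2143 n p"
    using permutes_inj_on[OF assms] by (rule not_schroeder_iff)
  also have "\<dots> \<longleftrightarrow> (\<exists>(i, j)\<in>diagram n p. 2 \<le> rank p i j)"
    using assms by (rule diagram_two_le_rank_iff[symmetric])
  also have "\<dots> \<longleftrightarrow> \<not> (\<forall>(i, j)\<in>essential_set n p. rank p i j \<le> 1)"
    unfolding essential_rank_le_1_iff by blast
  finally show ?thesis by blast
qed

end
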